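(* In the setting described in the context (training data $(x^{(k)},\alpha^{(k)})_{1\le k\le N}$ with the associated set functions $e$ and $f$): (1) for all $A,B$ with $\emptyset\neq A\subseteq B\subseteq\mathcal C$, $e(A)\le e(B)$; (2) for all $A,B$ with $A\subseteq B\subsetneq\mathcal C$, $f(A)\le f(B)$.
   Context: Let $\mathcal C=\{1,\dots,n\}$ and let $L$ be either a finite totally ordered set $0=\xi_1<\dots<\xi_l=1$ or $L=[0,1]$. Training data: $N$ pairs $(x^{(k)},\alpha^{(k)})$, $k=1,\dots,N$, with $x^{(k)}=(x^{(k)}_1,\dots,x^{(k)}_n)\in L^n$ and $\alpha^{(k)}\in L$. For nonempty $A\subseteq\mathcal C$ put $m_{k,A}=\min_{i\in A}x^{(k)}_i$; for $A\subsetneq\mathcal C$ put $\gamma_{k,A}=\max_{i\in\mathcal C\setminus A}x^{(k)}_i$. The Gödel implication is $a\to_G b=1$ if $a\le b$ and $a\to_G b=b$ otherwise; the epsilon product is $a\,\epsilon\, b=b$ if $a<b$ and $a\,\epsilon\, b=0$ if $a\ge b$. Define $e(A)=\min_{1\le k\le N}(m_{k,A}\to_G\alpha^{(k)})$ for nonempty $A\subseteq\mathcal C$, and $f(B)=\max_{1\le k\le N}(\gamma_{k,B}\,\epsilon\,\alpha^{(k)})$ for $B\subsetneq\mathcal C$. *)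

theory Defs
  imports Main "HOL.Real"
begin

definition goedel_imp :: "real \<Rightarrow> real \<Rightarrow> real" where
  "goedel_imp a b = (if a \<le> b then 1 else b)"

definition eps_prod :: "real \<Rightarrow> real \<Rightarrow> real" where
  "eps_prod a b = (if a < b then b else 0)"

text \<open>Criteria C = {1..n}; data x k i (k = 1..N, i = 1..n), labels alpha k.\<close>
definition m_val :: "(nat \<Rightarrow> nat \<Rightarrow> real) \<Rightarrow> nat \<Rightarrow> nat set \<Rightarrow> real" where
  "m_val x k A = Min ((\<lambda>i. x k i) ` A)"

definition gamma_val :: "nat \<Rightarrow> (nat \<Rightarrow> nat \<Rightarrow> real) \<Rightarrow> nat \<Rightarrow> nat set \<Rightarrow> real" where
  "gamma_val n x k A = Max ((\<lambda>i. x k i) ` ({1..n} - A))"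

definition e_fun :: "nat \<Rightarrow> (nat \<Rightarrow> nat \<Rightarrow> real) \<Rightarrow> (nat \<Rightarrow> real) \<Rightarrow> nat set \<Rightarrow> real" where
  "e_fun N x alpha A = Min ((\<lambda>k. goedel_imp (m_val x k A) (alpha k)) ` {1..N})"

definition f_fun :: "nat \<Rightarrow> nat \<Rightarrow> (nat \<Rightarrow> nat \<Rightarrow> real) \<Rightarrow> (nat \<Rightarrow> real) \<Rightarrow> nat set \<Rightarrow> real" where
  "f_fun n N x alpha B = Max ((\<lambda>k. eps_prod (gamma_val n x k B) (alpha k)) ` {1..N})"

definition admissible_scale :: "real set \<Rightarrow> bool" where
  "admissible_scale L \<longleftrightarrow> L = {0..1} \<or> (finite L \<and> L \<subseteq> {0..1} \<and> 0 \<in> L \<and> 1 \<in> L)"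

end

theory Submission
  imports Defs
begin

text \<open>Both set functions are monotone because each is an aggregate over the data of a
  quantity that is monotone in the set: enlarging \<open>A\<close> lowers \<open>m_{k,A}\<close>, and the Goedel
  implication is antitone in its first argument, so every term of the minimum defining \<open>e\<close>
  grows; enlarging \<open>B\<close> lowers \<open>\<gamma>_{k,B}\<close>, and the epsilon product is antitone in its first
  argument, so every term of the maximum defining \<open>f\<close> grows.\<close>

lemma Min_image_mono:
  fixes f g :: "'a \<Rightarrow> 'b::linorder"
  assumes "finite I" "I \<noteq> {}" "\<And>k. k \<in> I \<Longrightarrow> f k \<le> g k"
  shows "Min (f ` I) \<le> Min (g ` I)"
proof -
  obtain k where "k \<in> I" "Min (g ` I) = g k"
    using Min_in[of "g ` I"] assms(1,2) by blast
  then show ?thesis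
    using assms(1,3) by (metis Min_le dual_order.trans finite_imageI imageI)
qed

lemma Max_image_mono:
  fixes f g :: "'a \<Rightarrow> 'b::linorder"
  assumes "finite I" "I \<noteq> {}" "\<And>k. k \<in> I \<Longrightarrow> f k \<le> g k"
  shows "Max (f ` I) \<le> Max (g ` I)"
proof -
  obtain k where "k \<in> I" "Max (f ` I) = f k"
    using Max_in[of "f ` I"] assms(1,2) by blast
  then show ?thesis
    using assms(1,3) by (metis Max_ge order_trans finite_imageI imageI)
qed

lemma goedel_imp_antimono:
  "a \<le> a' \<Longrightarrow> b \<le> 1 \<Longrightarrow> goedel_imp a' b \<le> goedel_imp a b"
  by (auto simp: goedel_imp_def)

lemma eps_prod_antimono:
  "a \<le> a' \<Longrightarrow> 0 \<le> b \<Longrightarrow> eps_prod a' b \<le> eps_prod a b"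
  by (auto simp: eps_prod_def)

lemma m_val_antimono:
  "A \<noteq> {} \<Longrightarrow> A \<subseteq> B \<Longrightarrow> finite B \<Longrightarrow> m_val x k B \<le> m_val x k A"
  unfolding m_val_def by (rule Min_antimono) (auto intro: finite_subset)

lemma gamma_val_antimono:
  "A \<subseteq> B \<Longrightarrow> B \<subset> {1..n} \<Longrightarrow> gamma_val n x k B \<le> gamma_val n x k A"
  unfolding gamma_val_def by (rule Max_mono) auto

lemma e_fun_mono:
  assumes "N \<ge> 1" "\<And>k. k \<in> {1..N} \<Longrightarrow> alpha k \<le> 1"
    and "A \<noteq> {}" "A \<subseteq> B" "finite B"
  shows "e_fun N x alpha A \<le> e_fun N x alpha B"
  unfolding e_fun_def
  using assms by (intro Min_image_mono goedel_imp_antimono m_val_antimono) auto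

lemma f_fun_mono:
  assumes "N \<ge> 1" "\<And>k. k \<in> {1..N} \<Longrightarrow> 0 \<le> alpha k"
    and "A \<subseteq> B" "B \<subset> {1..n}"
  shows "f_fun n N x alpha A \<le> f_fun n N x alpha B"
  unfolding f_fun_def
  using assms by (intro Max_image_mono eps_prod_antimono gamma_val_antimono) auto

text \<open>Only the labels need to lie in \<open>[0,1]\<close>.\<close>

theorem lemma2:
  fixes n N :: nat and L :: "real set"
    and x :: "nat \<Rightarrow> nat \<Rightarrow> real" and alpha :: "nat \<Rightarrow> real"
  assumes "admissible_scale L"
    and "n \<ge> 1" and "N \<ge> 1"
    and "\<And>k i. k \<in> {1..N} \<Longrightarrow> i \<in> {1..n} \<Longrightarrow> x k i \<in> L"
    and "\<And>k. k \<in> {1..N} \<Longrightarrow> alpha k \<in> L"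
  shows "(\<forall>A B. A \<noteq> {} \<and> A \<subseteq> B \<and> B \<subseteq> {1..n} \<longrightarrow> e_fun N x alpha A \<le> e_fun N x alpha B)
       \<and> (\<forall>A B. A \<subseteq> B \<and> B \<subset> {1..n} \<longrightarrow> f_fun n N x alpha A \<le> f_fun n N x alpha B)"
proof -
  have "L \<subseteq> {0..1}"
    using assms(1) unfolding admissible_scale_def by auto
  then have alpha_unit: "\<And>k. k \<in> {1..N} \<Longrightarrow> 0 \<le> alpha k \<and> alpha k \<le> 1"
    using assms(5) by force
  show ?thesis
  proof (intro conjI allI impI)
    fix A B :: "nat set"
    assume "A \<noteq> {} \<and> A \<subseteq> B \<and> B \<subseteq> {1..n}"
    moreover from this have "finite B"
      using finite_subset by blast
    ultimately show "e_fun N x alpha A \<le> e_fun N x alpha B"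
      using e_fun_mono[OF assms(3)] alpha_unit by simp
  next
    fix A B :: "nat set"
    assume "A \<subseteq> B \<and> B \<subset> {1..n}"
    then show "f_fun n N x alpha A \<le> f_fun n N x alpha B"
      using f_fun_mono[OF assms(3)] alpha_unit by simp
  qed
qed

end
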